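(* Let $\mathbf X=\{X_n\}$ and $\mathbf Y=\{Y_n\}$ be general sources. If $\mathbf X$ is an approximating source for $\mathbf Y$, then $$\inf_{0<\epsilon<1}\ \liminf_{n\to\infty}\ \inf_{0\le\delta<1-\epsilon}\{c_n^x(\delta+\epsilon)-c_n^y(\delta)\}\ \ge 0 .$$
   Context: Logarithms are natural. A general source $\mathbf X=\{X_n\}_{n\ge1}$ is a sequence of random variables, $X_n$ taking values in a countable set $\mathcal X_n$, with no consistency requirements between different $n$. Similarly $Y_n$ takes values in a countable set $\mathcal Y_n$. For a random variable $Z$ on a countable set $\mathcal Z$ with pmf $P_Z$, list the elements of positive probability as $z_1,z_2,\dots$ (a finite or countably infinite list) with $P_Z(z_1)\ge P_Z(z_2)\ge\cdots$ (ties broken arbitrarily). Set $\delta_0=0$ and $\delta_k=\sum_{i\le k}P_Z(z_i)$. For $\delta\in[0,1)$ define $c^z(\delta)=\log\frac{1}{P_Z(z_k)}$, where $k$ is the unique index with $\delta\in[\delta_{k-1},\delta_k)$. Here $c_n^x$ and $c_n^y$ denote this function built from $P_{X_n}$ and from $P_{Y_n}$ respectively. The variational distance is $d(P,Q)=\sum_a|P(a)-Q(a)|$. $\mathbf X$ is an approximating source for $\mathbf Y$ if there exist deterministic maps $\phi_n:\mathcal X_n\to\mathcal Y_n$ with $\lim_{n\to\infty}d(P_{Y_n},P_{\phi_n(X_n)})=0$. *)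

theory Defs
  imports "HOL-Probability.Probability"
begin

definition var_dist :: "'a pmf \<Rightarrow> 'a pmf \<Rightarrow> real" where
  "var_dist P Q = (\<Sum>\<^sub>\<infinity>a. \<bar>pmf P a - pmf Q a\<bar>)"

text \<open>The function c(delta): list the support in non-increasing order of probability
  z_1, z_2, ...; with delta_k the partial sums, c(delta) = log (1 / P(z_k)) where
  delta lies in [delta_(k-1), delta_k).  Since ties have equal probabilities, this equals
  log(1/t) for the unique probability value t of the support with
  P{z. P z > t} <= delta < P{z. P z >= t}.\<close>
definition cfun :: "'a pmf \<Rightarrow> real \<Rightarrow> real" where
  "cfun P \<delta> = ln (1 / (THE t. t \<in> pmf P ` set_pmf P
        \<and> measure_pmf.prob P {z. pmf P z > t} \<le> \<delta>
        \<and> \<delta> < measure_pmf.prob P {z. pmf P z \<ge> t}))"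

definition approximating_source :: "(nat \<Rightarrow> 'a pmf) \<Rightarrow> (nat \<Rightarrow> 'b pmf) \<Rightarrow> bool" where
  "approximating_source X Y \<longleftrightarrow>
     (\<exists>\<phi> :: nat \<Rightarrow> 'a \<Rightarrow> 'b. (\<lambda>n. var_dist (Y n) (map_pmf (\<phi> n) (X n))) \<longlonglongrightarrow> 0)"

end

theory Submission
  imports Defs
begin

(* For a pmf P and 0 <= delta < 1, the value c(delta) is ln(1/t) for the
   unique "level" t of P at delta: a probability value of P with
   P{p > t} <= delta < P{p >= t}.  We first show that levels exist and are unique
   (only finitely many points have probability >= r > 0, and P{p >= 1/(k+1)} tends to 1).
   The heart of the proof is a comparison of levels: if s is the level of X at
   delta + eps, t the level of Y at delta, and d the variational distance between Y and
   the image of X under phi, then eps * (s - t) <= s * d.  Indeed the image under phi of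
   {x. X x >= s} carries more than delta + eps of phi(X), each of its points has
   phi(X)-mass >= s, and at most delta of it lies where Y exceeds t; on the rest Y and
   phi(X) differ by at least (1 - t/s) times the phi(X)-mass.  Taking logarithms gives
   c_X(delta + eps) - c_Y(delta) >= ln(1 - d/eps) uniformly in delta, and since d -> 0
   along an approximating source, the liminf of the infimum over delta is >= 0. *)

lemma finite_pmf_ge:
  fixes P :: "'a pmf" assumes "r > 0"
  shows "finite {x. pmf P x \<ge> r}"
proof -
  have "finite {x. pmf P x \<ge> r} \<and> card {x. pmf P x \<ge> r} \<le> nat \<lceil>1/r\<rceil>"
  proof (rule finite_if_finite_subsets_card_bdd)
    fix G assume G: "G \<subseteq> {x. pmf P x \<ge> r}" "finite G"
    have "real (card G) * r = (\<Sum>x\<in>G. r)" by simp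
    also have "\<dots> \<le> (\<Sum>x\<in>G. pmf P x)" using G by (intro sum_mono) auto
    also have "\<dots> = measure_pmf.prob P G" using G by (simp add: measure_measure_pmf_finite)
    also have "\<dots> \<le> 1" by simp
    finally have "real (card G) \<le> 1 / r" using assms by (simp add: field_simps)
    then show "card G \<le> nat \<lceil>1/r\<rceil>" by linarith
  qed
  then show ?thesis by blast
qed

text \<open>The points of probability at least 1/(k+1) exhaust the support, so their mass tends to 1.\<close>
lemma prob_pmf_ge_tendsto_1:
  fixes P :: "'a pmf"
  shows "(\<lambda>k. measure_pmf.prob P {z. pmf P z \<ge> 1 / real (Suc k)}) \<longlonglongrightarrow> 1"
proof -
  define A where "A k = {z. pmf P z \<ge> 1 / real (Suc k)}" for k
  have "incseq A"
    unfolding A_def incseq_def by (auto intro: order_trans[rotated] simp: frac_le)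
  then have "(\<lambda>k. measure_pmf.prob P (A k)) \<longlonglongrightarrow> measure_pmf.prob P (\<Union>k. A k)"
    by (intro measure_pmf.finite_Lim_measure_incseq) auto
  moreover have "(\<Union>k. A k) = set_pmf P"
  proof
    show "(\<Union>k. A k) \<subseteq> set_pmf P" unfolding A_def by (auto simp: set_pmf_iff)
    show "set_pmf P \<subseteq> (\<Union>k. A k)"
    proof
      fix z assume "z \<in> set_pmf P"
      then have "pmf P z > 0" by (simp add: pmf_positive)
      then obtain k where "1 / real (Suc k) < pmf P z"
        using reals_Archimedean by (auto simp: inverse_eq_divide)
      then show "z \<in> (\<Union>k. A k)" unfolding A_def by (auto intro: less_imp_le)
    qed
  qed
  moreover have "measure_pmf.prob P (set_pmf P) = 1"
    by (simp add: measure_pmf.prob_eq_1 AE_measure_pmf)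
  ultimately show ?thesis unfolding A_def by simp
qed

text \<open>t is the level of P at delta: the probability value at which the cumulative mass of
  the points sorted by decreasing probability crosses delta.\<close>
definition is_level :: "'a pmf \<Rightarrow> real \<Rightarrow> real \<Rightarrow> bool" where
  "is_level P \<delta> t \<longleftrightarrow> t \<in> pmf P ` set_pmf P
     \<and> measure_pmf.prob P {z. pmf P z > t} \<le> \<delta>
     \<and> \<delta> < measure_pmf.prob P {z. pmf P z \<ge> t}"

lemma is_level_pos: "is_level P \<delta> t \<Longrightarrow> t > 0"
  by (auto simp: is_level_def pmf_positive)

lemma cfun_is_level: "cfun P \<delta> = ln (1 / (THE t. is_level P \<delta> t))"
  by (simp add: cfun_def is_level_def)

text \<open>Existence: if the points of probability >= r > 0 carry more than delta, then among the
  finitely many probability values >= r, the largest t with P{p >= t} > delta is a level.\<close>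
lemma is_level_exists_above:
  fixes P :: "'a pmf" assumes r0: "r > 0" and "0 \<le> \<delta>" and r: "\<delta> < measure_pmf.prob P {z. pmf P z \<ge> r}"
  shows "\<exists>t. is_level P \<delta> t"
proof -
  define S where "S = {t \<in> pmf P ` set_pmf P. t \<ge> r \<and> \<delta> < measure_pmf.prob P {z. pmf P z \<ge> t}}"
  have finS: "finite S"
    by (rule finite_subset[of _ "pmf P ` {z. pmf P z \<ge> r}"]) (auto simp: S_def finite_pmf_ge[OF r0])
  have "S \<noteq> {}"
  proof -
    define A where "A = {z. pmf P z \<ge> r}"
    have finA: "finite A" using finite_pmf_ge[OF r0] by (simp add: A_def)
    have "A \<noteq> {}" using r \<open>0 \<le> \<delta>\<close> by (auto simp: A_def[symmetric])
    define t0 where "t0 = Min (pmf P ` A)"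
    have t0A: "t0 \<in> pmf P ` A" unfolding t0_def using finA \<open>A \<noteq> {}\<close> by (intro Min_in) auto
    have "A \<subseteq> {z. pmf P z \<ge> t0}" unfolding t0_def using finA by auto
    then have "measure_pmf.prob P A \<le> measure_pmf.prob P {z. pmf P z \<ge> t0}"
      by (intro measure_pmf.finite_measure_mono) simp_all
    moreover have "t0 \<in> pmf P ` set_pmf P" using t0A r0 by (force simp: A_def set_pmf_iff)
    ultimately have "t0 \<in> S" using t0A r by (auto simp: S_def A_def)
    then show ?thesis by auto
  qed
  define t where "t = Max S"
  have tS: "t \<in> S" unfolding t_def using finS \<open>S \<noteq> {}\<close> by (rule Max_in)
  have "measure_pmf.prob P {z. pmf P z > t} \<le> \<delta>"
  proof (rule ccontr)
    assume c: "\<not> ?thesis"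
    define G where "G = {z. pmf P z > t}"
    have tr: "t \<ge> r" using tS S_def by auto
    have finG: "finite G" using tr by (intro finite_subset[OF _ finite_pmf_ge[OF r0, of P]]) (auto simp: G_def)
    have "G \<noteq> {}" using c \<open>0 \<le> \<delta>\<close> G_def by auto
    text \<open>The smallest probability value above t would also belong to S.\<close>
    define t' where "t' = Min (pmf P ` G)"
    have t'G: "t' \<in> pmf P ` G" unfolding t'_def using finG \<open>G \<noteq> {}\<close> by (intro Min_in) auto
    then have t't: "t' > t" by (auto simp: G_def)
    have "{z. pmf P z \<ge> t'} = G" using t't finG by (auto simp: G_def t'_def)
    then have "t' \<in> S" using t'G t't tr c r0 unfolding S_def G_def by (auto simp: set_pmf_iff)
    then show False using t't finS unfolding t_def by (meson Max_ge not_le)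
  qed
  then show ?thesis using tS by (auto simp: S_def is_level_def)
qed

lemma is_level_exists:
  fixes P :: "'a pmf" assumes "0 \<le> \<delta>" "\<delta> < 1"
  shows "\<exists>t. is_level P \<delta> t"
proof -
  obtain k where "\<delta> < measure_pmf.prob P {z. pmf P z \<ge> 1 / real (Suc k)}"
    using order_tendstoD(1)[OF prob_pmf_ge_tendsto_1 assms(2)] by (auto simp: eventually_sequentially)
  then show ?thesis using assms(1) by (intro is_level_exists_above) auto
qed

text \<open>Uniqueness: two distinct levels t1 < t2 would give P{p >= t2} <= P{p > t1}.\<close>
lemma is_level_unique:
  assumes "is_level P \<delta> t1" "is_level P \<delta> t2"
  shows "t1 = t2"
proof -
  have False if "a < b" "is_level P \<delta> a" "is_level P \<delta> b" for a b
  proof -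
    have "measure_pmf.prob P {z. pmf P z \<ge> b} \<le> measure_pmf.prob P {z. pmf P z > a}"
      using \<open>a < b\<close> by (intro measure_pmf.finite_measure_mono) auto
    then show False using that by (auto simp: is_level_def)
  qed
  then show ?thesis using assms by (metis linorder_neqE)
qed

lemma cfun_level:
  fixes P :: "'a pmf" assumes "0 \<le> \<delta>" "\<delta> < 1"
  obtains t where "is_level P \<delta> t" "cfun P \<delta> = ln (1 / t)"
proof -
  have "\<exists>!t. is_level P \<delta> t" using is_level_exists[OF assms] is_level_unique by blast
  then have "is_level P \<delta> (THE t. is_level P \<delta> t)" by (rule theI')
  then show ?thesis using that by (simp add: cfun_is_level)
qed

lemma pmf_summable_on: "pmf P summable_on A"
proof -
  have "Infinite_Sum.abs_summable_on (pmf P) A"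
    using abs_summable_equivalent pmf_abs_summable by blast
  then show ?thesis by simp
qed

lemma abs_diff_pmf_summable: "(\<lambda>a. \<bar>pmf P a - pmf Q a\<bar>) summable_on A"
proof (rule summable_on_comparison_test)
  show "(\<lambda>a. pmf P a + pmf Q a) summable_on A"
    by (intro summable_on_add pmf_summable_on)
qed (auto simp: abs_le_iff)

lemma sum_abs_diff_le_var_dist:
  assumes "finite B"
  shows "(\<Sum>y\<in>B. \<bar>pmf P y - pmf Q y\<bar>) \<le> var_dist P Q"
proof -
  have "(\<Sum>y\<in>B. \<bar>pmf P y - pmf Q y\<bar>) = infsum (\<lambda>y. \<bar>pmf P y - pmf Q y\<bar>) B"
    using assms by simp
  also have "\<dots> \<le> infsum (\<lambda>y. \<bar>pmf P y - pmf Q y\<bar>) UNIV"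
    by (rule infsum_mono_neutral) (auto intro: abs_diff_pmf_summable)
  finally show ?thesis by (simp add: var_dist_def)
qed

lemma var_dist_nonneg: "var_dist P Q \<ge> 0"
  unfolding var_dist_def by (rule infsum_nonneg) simp

text \<open>A deterministic map can only merge mass: the image point carries at least as much.\<close>
lemma pmf_map_pmf_ge: "pmf X x \<le> pmf (map_pmf \<phi> X) (\<phi> x)"
proof -
  have "pmf X x = measure_pmf.prob X {x}" by (simp add: measure_pmf_single)
  also have "\<dots> \<le> measure_pmf.prob X (\<phi> -` {\<phi> x})"
    by (rule measure_pmf.finite_measure_mono) auto
  finally show ?thesis by (simp add: pmf_map)
qed

lemma mass_le_discrepancy:
  fixes Y Z :: "'b pmf"
  assumes "finite D" "0 < t" "t < s"
    and "\<And>y. y \<in> D \<Longrightarrow> s \<le> pmf Z y \<and> pmf Y y \<le> t"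
  shows "(s - t) * (\<Sum>y\<in>D. pmf Z y) \<le> s * (\<Sum>y\<in>D. \<bar>pmf Y y - pmf Z y\<bar>)"
proof -
  have "(s - t) * pmf Z y \<le> s * \<bar>pmf Y y - pmf Z y\<bar>" if "y \<in> D" for y
  proof -
    have "s * t \<le> pmf Z y * t" "s * pmf Y y \<le> s * t"
      using assms(2,3) assms(4)[OF that] by (auto intro: mult_right_mono mult_left_mono)
    moreover have "s * (pmf Z y - pmf Y y) \<le> s * \<bar>pmf Y y - pmf Z y\<bar>"
      using assms(2,3) by (intro mult_left_mono) auto
    ultimately show ?thesis by (simp add: algebra_simps)
  qed
  then show ?thesis by (simp add: sum_distrib_left sum_mono)
qed

lemma level_gap_bound:
  fixes X :: "'a pmf" and Y :: "'b pmf" and \<phi> :: "'a \<Rightarrow> 'b"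
  assumes "\<epsilon> > 0" and s: "is_level X (\<delta> + \<epsilon>) s" and t: "is_level Y \<delta> t"
  shows "\<epsilon> * (s - t) \<le> s * var_dist Y (map_pmf \<phi> X)"
proof -
  define Z where "Z = map_pmf \<phi> X"
  define d where "d = var_dist Y Z"
  define e where "e y = \<bar>pmf Y y - pmf Z y\<bar>" for y
  have s0: "s > 0" and t0: "t > 0" using s t by (auto intro: is_level_pos)
  define B where "B = \<phi> ` {x. pmf X x \<ge> s}"
  have finB: "finite B" unfolding B_def using finite_pmf_ge[OF s0, of X] by simp
  have Bs: "pmf Z y \<ge> s" if "y \<in> B" for y
    using that pmf_map_pmf_ge[of X _ \<phi>] unfolding B_def Z_def by (auto intro: order_trans)
  have "measure_pmf.prob X {x. pmf X x \<ge> s} \<le> measure_pmf.prob X (\<phi> -` B)"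
    by (rule measure_pmf.finite_measure_mono) (auto simp: B_def)
  then have ZB: "(\<Sum>y\<in>B. pmf Z y) > \<delta> + \<epsilon>"
    using s finB by (simp add: Z_def is_level_def measure_measure_pmf_finite[symmetric])
  show ?thesis
  proof (cases "s \<le> t")
    case True
    then have "\<epsilon> * (s - t) \<le> 0" using assms(1) by (simp add: mult_nonneg_nonpos)
    also have "\<dots> \<le> s * var_dist Y (map_pmf \<phi> X)" 
      using s0 by (intro mult_nonneg_nonneg var_dist_nonneg) simp
    finally show ?thesis .
  next
    case False
    define C where "C = B \<inter> {y. pmf Y y > t}"
    define D where "D = B - C"
    have finCD: "finite C" "finite D" using finB by (auto simp: C_def D_def)
    have split: "sum f B = sum f C + sum f D" for f :: "'b \<Rightarrow> real"
      using finB by (metis C_def D_def Int_lower1 sum.subset_diff add.commute)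
    text \<open>On C, Y carries at most delta, so Z exceeds delta by at most the discrepancy.\<close>
    have "(\<Sum>y\<in>C. pmf Y y) \<le> measure_pmf.prob Y {z. pmf Y z > t}"
      using finCD by (simp add: measure_measure_pmf_finite[symmetric] C_def
          measure_pmf.finite_measure_mono)
    then have YC: "(\<Sum>y\<in>C. pmf Y y) \<le> \<delta>" using t by (simp add: is_level_def)
    have "(\<Sum>y\<in>C. pmf Z y) \<le> (\<Sum>y\<in>C. pmf Y y + e y)"
      by (intro sum_mono) (auto simp: e_def)
    then have ZC: "(\<Sum>y\<in>C. pmf Z y) \<le> \<delta> + (\<Sum>y\<in>C. e y)"
      using YC by (simp add: sum.distrib)
    have ZD: "(s - t) * (\<Sum>y\<in>D. pmf Z y) \<le> s * (\<Sum>y\<in>D. e y)"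
      unfolding e_def using finCD t0 False Bs by (intro mass_le_discrepancy) (auto simp: D_def C_def)
    have "(s - t) * (\<delta> + \<epsilon>) < (s - t) * (\<Sum>y\<in>C. pmf Z y) + (s - t) * (\<Sum>y\<in>D. pmf Z y)"
      using ZB False by (simp add: split flip: distrib_left)
    also have "\<dots> \<le> (s - t) * (\<delta> + (\<Sum>y\<in>C. e y)) + s * (\<Sum>y\<in>D. e y)"
      using ZC ZD False by (intro add_mono mult_left_mono) auto
    also have "\<dots> \<le> (s - t) * \<delta> + s * (\<Sum>y\<in>B. e y)"
      using t0 by (simp add: split algebra_simps e_def sum_nonneg)
    also have "\<dots> \<le> (s - t) * \<delta> + s * d"
      using sum_abs_diff_le_var_dist[OF finB] s0 by (simp add: d_def e_def)
    finally show ?thesis by (simp add: d_def Z_def algebra_simps)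
  qed
qed

lemma cfun_gap_lower_bound:
  fixes X :: "'a pmf" and Y :: "'b pmf" and \<phi> :: "'a \<Rightarrow> 'b"
  defines "d \<equiv> var_dist Y (map_pmf \<phi> X)"
  assumes "0 < \<epsilon>" "d < \<epsilon>" "0 \<le> \<delta>" "\<delta> < 1 - \<epsilon>"
  shows "ln (1 - d / \<epsilon>) \<le> cfun X (\<delta> + \<epsilon>) - cfun Y \<delta>"
proof -
  obtain s where s: "is_level X (\<delta> + \<epsilon>) s" "cfun X (\<delta> + \<epsilon>) = ln (1 / s)"
    using cfun_level[of "\<delta> + \<epsilon>" X] assms by auto
  obtain t where t: "is_level Y \<delta> t" "cfun Y \<delta> = ln (1 / t)"
    using cfun_level[of \<delta> Y] assms by auto
  have s0: "s > 0" and t0: "t > 0" using s t by (auto intro: is_level_pos)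
  have "\<epsilon> * (s - t) \<le> s * d" unfolding d_def by (rule level_gap_bound[OF \<open>0 < \<epsilon>\<close> s(1) t(1)])
  then have "1 - d / \<epsilon> \<le> t / s" using \<open>0 < \<epsilon>\<close> s0 by (simp add: field_simps)
  moreover have "0 < 1 - d / \<epsilon>" using assms by (simp add: field_simps)
  ultimately have "ln (1 - d / \<epsilon>) \<le> ln (t / s)" by simp
  also have "\<dots> = ln (1 / s) - ln (1 / t)" using s0 t0 by (simp add: ln_div)
  finally show ?thesis using s(2) t(2) by simp
qed

lemma liminf_nonneg_if_eventually_ge:
  fixes a :: "nat \<Rightarrow> ereal" and g :: "nat \<Rightarrow> real"
  assumes "g \<longlonglongrightarrow> 0" "eventually (\<lambda>n. ereal (g n) \<le> a n) sequentially"
  shows "0 \<le> liminf a"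
proof -
  have "(\<lambda>n. ereal (g n)) \<longlonglongrightarrow> 0" using assms(1) by (simp add: zero_ereal_def tendsto_ereal)
  then have "0 = liminf (\<lambda>n. ereal (g n))" by (simp add: lim_imp_Liminf)
  also have "\<dots> \<le> liminf a" using assms(2) by (rule Liminf_mono)
  finally show ?thesis .
qed

theorem theorem2:
  fixes X :: "nat \<Rightarrow> 'a pmf" and Y :: "nat \<Rightarrow> 'b pmf"
  assumes "approximating_source X Y"
  shows "(INF \<epsilon>\<in>{0<..<1::real}. liminf (\<lambda>n.
            INF \<delta>\<in>{0..<1 - \<epsilon>}. ereal (cfun (X n) (\<delta> + \<epsilon>) - cfun (Y n) \<delta>))) \<ge> 0"
proof (rule INF_greatest)
  fix \<epsilon> :: real assume "\<epsilon> \<in> {0<..<1}"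
  then have eps: "0 < \<epsilon>" by simp
  obtain \<phi> :: "nat \<Rightarrow> 'a \<Rightarrow> 'b" where "(\<lambda>n. var_dist (Y n) (map_pmf (\<phi> n) (X n))) \<longlonglongrightarrow> 0"
    using assms unfolding approximating_source_def by blast
  moreover define d where "d = (\<lambda>n. var_dist (Y n) (map_pmf (\<phi> n) (X n)))"
  ultimately have lim: "d \<longlonglongrightarrow> 0" by simp
  have "(\<lambda>n. ln (1 - d n / \<epsilon>)) \<longlonglongrightarrow> ln (1 - 0 / \<epsilon>)"
    using lim eps by (intro tendsto_intros) auto
  moreover have "eventually (\<lambda>n. ereal (ln (1 - d n / \<epsilon>))
      \<le> (INF \<delta>\<in>{0..<1 - \<epsilon>}. ereal (cfun (X n) (\<delta> + \<epsilon>) - cfun (Y n) \<delta>))) sequentially"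
    using order_tendstoD(2)[OF lim eps]
    by eventually_elim (auto intro!: INF_greatest cfun_gap_lower_bound[OF eps] simp: d_def)
  ultimately show "0 \<le> liminf (\<lambda>n. INF \<delta>\<in>{0..<1 - \<epsilon>}. ereal (cfun (X n) (\<delta> + \<epsilon>) - cfun (Y n) \<delta>))"
    by (intro liminf_nonneg_if_eventually_ge) auto
qed

end
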